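(* Let $X$ be a Banach space and $A,B\in\mathcal{L}(X)$. Then $\sigma_d(AB)=\sigma_d(BA)$.
   Context: $\mathcal{L}(X)$ is the Banach algebra of bounded linear operators on $X$. An element $T$ of $\mathcal{L}(X)$ has a g-Drazin inverse if there is $S\in\mathcal{L}(X)$ with $S=STS$, $S$ commuting with every operator that commutes with $T$, and $T-T^2S$ quasinilpotent (spectral radius $0$). The g-Drazin spectrum is $\sigma_d(T)=\{\lambda\in\mathbb{C} : \lambda I-T \text{ has no g-Drazin inverse in } \mathcal{L}(X)\}$. *)

theory Defs
  imports "HOL-Analysis.Analysis"
begin

text \<open>Complex Banach spaces: HOL-Analysis only provides real normed spaces,
so we add a complex scalar multiplication compatible with the real one.\<close>

class complex_normed_space = real_normed_vector +
  fixes scaleC :: "complex \<Rightarrow> 'a \<Rightarrow> 'a"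
  assumes scaleC_add_right: "scaleC a (x + y) = scaleC a x + scaleC a y"
    and scaleC_add_left: "scaleC (a + b) x = scaleC a x + scaleC b x"
    and scaleC_scaleC: "scaleC a (scaleC b x) = scaleC (a * b) x"
    and scaleC_one: "scaleC 1 x = x"
    and scaleR_scaleC: "scaleR r x = scaleC (of_real r) x"
    and norm_scaleC: "norm (scaleC a x) = cmod a * norm x"

class complex_banach = complex_normed_space + banach

definition Lop :: "('a::complex_normed_space \<Rightarrow> 'a) set" where
  "Lop = {T. bounded_linear T \<and> (\<forall>c x. T (scaleC c x) = scaleC c (T x))}"

definition invertible_op :: "('a::complex_normed_space \<Rightarrow> 'a) \<Rightarrow> bool" where
  "invertible_op T \<longleftrightarrow> (\<exists>S\<in>Lop. S \<circ> T = id \<and> T \<circ> S = id)"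

definition op_spectrum :: "('a::complex_normed_space \<Rightarrow> 'a) \<Rightarrow> complex set" where
  "op_spectrum T = {\<mu>. \<not> invertible_op (\<lambda>x. scaleC \<mu> x - T x)}"

text \<open>Spectral radius (taken to be 0 when the spectrum is empty, i.e. X = 0).\<close>
definition spectral_radius :: "('a::complex_normed_space \<Rightarrow> 'a) \<Rightarrow> real" where
  "spectral_radius T = Sup (insert 0 (cmod ` op_spectrum T))"

definition quasinilpotent :: "('a::complex_normed_space \<Rightarrow> 'a) \<Rightarrow> bool" where
  "quasinilpotent T \<longleftrightarrow> spectral_radius T = 0"

definition has_gDrazin_inverse :: "('a::complex_normed_space \<Rightarrow> 'a) \<Rightarrow> bool" where
  "has_gDrazin_inverse T \<longleftrightarrow>
     (\<exists>S\<in>Lop. S = S \<circ> T \<circ> S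
            \<and> (\<forall>U\<in>Lop. U \<circ> T = T \<circ> U \<longrightarrow> U \<circ> S = S \<circ> U)
            \<and> quasinilpotent (\<lambda>x. T x - T (T (S x))))"

definition gDrazin_spectrum :: "('a::complex_normed_space \<Rightarrow> 'a) \<Rightarrow> complex set" where
  "gDrazin_spectrum T = {\<mu>. \<not> has_gDrazin_inverse (\<lambda>x. scaleC \<mu> x - T x)}"

end

theory Submission
  imports Defs
begin

text \<open>Once a quasinilpotent operator \<open>q\<close> is
  characterised by the invertibility of \<open>\<mu> - q\<close> for all \<open>\<mu> \<noteq> 0\<close> (this needs the spectrum to be
  bounded, which the Neumann series provides), the theorem becomes a statement about rings.
  For \<open>\<mu> = 0\<close> it is Cline's formula: if \<open>d\<close> is the g-Drazin inverse of \<open>ab\<close>, then \<open>b d\<^sup>2 a\<close> is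
  the g-Drazin inverse of \<open>ba\<close>. For \<open>\<mu> \<noteq> 0\<close> one passes to spectral idempotents: \<open>t\<close> is
  g-Drazin invertible iff some idempotent \<open>p\<close> in its double commutant makes \<open>tp\<close>
  quasinilpotent and \<open>t + p\<close> invertible. If \<open>p\<close> is one for \<open>\<mu> - ab\<close> and \<open>w\<close> inverts \<open>ab\<close> on
  the range of \<open>p\<close>, then \<open>b w a\<close> is one for \<open>\<mu> - ba\<close>, by Jacobson's lemma
  (\<open>\<mu> - xy\<close> invertible implies \<open>\<mu> - yx\<close> invertible).\<close>

section \<open>Units and double commutants\<close>

definition is_invertible :: "'a::monoid_mult \<Rightarrow> bool" where
  "is_invertible x \<longleftrightarrow> (\<exists>y. y * x = 1 \<and> x * y = 1)"

lemma is_invertibleI: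
  assumes "x * r = 1" and "l * x = (1::'a::monoid_mult)"
  shows "is_invertible x"
proof -
  have "l = l * (x * r)" using assms(1) by simp
  also have "\<dots> = r" using assms(2) by (simp flip: mult.assoc)
  finally have "l = r" .
  then show ?thesis using assms unfolding is_invertible_def by blast
qed

lemma is_invertible_uminus_iff [simp]:
  "is_invertible (- x) \<longleftrightarrow> is_invertible (x::'a::{ring,monoid_mult})"
proof -
  have "is_invertible (- y)" if "is_invertible y" for y :: 'a
  proof -
    obtain z where "z * y = 1" "y * z = 1" using \<open>is_invertible y\<close> unfolding is_invertible_def by blast
    then have "(- z) * (- y) = 1" "(- y) * (- z) = 1" by simp_all
    then show ?thesis unfolding is_invertible_def by blast
  qed
  from this[of x] this[of "- x"] show ?thesis by auto
qed

definition double_commutant :: "'a::semigroup_mult \<Rightarrow> 'a set" where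
  "double_commutant t = {s. \<forall>u. u * t = t * u \<longrightarrow> u * s = s * u}"

lemma double_commutantI: "(\<And>u. u * t = t * u \<Longrightarrow> u * s = s * u) \<Longrightarrow> s \<in> double_commutant t"
  unfolding double_commutant_def by blast

lemma double_commutantD: "s \<in> double_commutant t \<Longrightarrow> u * t = t * u \<Longrightarrow> u * s = s * u"
  unfolding double_commutant_def by blast

lemma double_commutant_commute: "s \<in> double_commutant t \<Longrightarrow> t * s = s * t"
  by (erule double_commutantD) (rule refl)

lemma double_commutant_self: "t \<in> double_commutant t"
  by (rule double_commutantI)

lemma double_commutant_one: "1 \<in> double_commutant (t::'a::monoid_mult)"
  by (rule double_commutantI) simp

lemma double_commutant_mult:
  assumes "s \<in> double_commutant t" and "s' \<in> double_commutant t"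
  shows "s * s' \<in> double_commutant t"
proof (rule double_commutantI)
  fix u assume "u * t = t * u"
  then have "u * s = s * u" "u * s' = s' * u" using assms by (blast dest: double_commutantD)+
  then show "u * (s * s') = s * s' * u" by (metis mult.assoc)
qed

lemma double_commutant_add:
  fixes t :: "'a::ring"
  assumes "s \<in> double_commutant t" and "s' \<in> double_commutant t"
  shows "s + s' \<in> double_commutant t"
proof (rule double_commutantI)
  fix u assume "u * t = t * u"
  then have "u * s = s * u" "u * s' = s' * u" using assms by (blast dest: double_commutantD)+
  then show "u * (s + s') = (s + s') * u" by (simp add: distrib_left distrib_right)
qed

lemma double_commutant_diff:
  fixes t :: "'a::ring"
  assumes "s \<in> double_commutant t" and "s' \<in> double_commutant t"
  shows "s - s' \<in> double_commutant t"
proof (rule double_commutantI)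
  fix u assume "u * t = t * u"
  then have "u * s = s * u" "u * s' = s' * u" using assms by (blast dest: double_commutantD)+
  then show "u * (s - s') = (s - s') * u" by (simp add: left_diff_distrib right_diff_distrib)
qed

lemma commute_inverse:
  assumes "y * v = 1" "v * y = 1" "x * y = y * (x::'a::monoid_mult)"
  shows "x * v = v * x"
  by (metis assms mult.assoc mult_1_left mult_1_right)

lemma double_commutant_inverse:
  "y \<in> double_commutant t \<Longrightarrow> y * v = 1 \<Longrightarrow> v * y = 1 \<Longrightarrow> v \<in> double_commutant (t::'a::monoid_mult)"
  by (rule double_commutantI) (rule commute_inverse, assumption+, erule double_commutantD)

lemma double_commutant_mult_swap:
  fixes a b f :: "'a::semigroup_mult"
  assumes f: "f \<in> double_commutant (a * b)" and e: "e = a * b * f" "e = f * (a * b)"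
  shows "b * e * a \<in> double_commutant (b * a)"
proof (rule double_commutantI)
  fix u assume u: "u * (b * a) = b * a * u"
  have "(a * u * b) * (a * b) = a * (u * (b * a)) * b" by (simp only: mult.assoc)
  also have "\<dots> = (a * b) * (a * u * b)" by (simp only: u mult.assoc)
  finally have "(a * u * b) * (a * b) = (a * b) * (a * u * b)" .
  then have uf: "(a * u * b) * f = f * (a * u * b)" by (rule double_commutantD[OF f])
  have "u * (b * e * a) = (u * (b * a)) * (b * f * a)" unfolding e(1) by (simp only: mult.assoc)
  also have "\<dots> = b * (a * u * b * f) * a" by (simp only: u mult.assoc)
  also have "\<dots> = b * (f * (a * u * b)) * a" by (simp only: uf)
  also have "\<dots> = (b * f * a) * (u * (b * a))" by (simp only: mult.assoc)
  also have "\<dots> = (b * e * a) * u" unfolding e(2) by (simp only: u mult.assoc)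
  finally show "u * (b * e * a) = (b * e * a) * u" .
qed

section \<open>Generalized Drazin inverses in algebras\<close>

text \<open>A unital algebra over a field, given by its structure map into the centre. The class
  \<open>ring_1\<close> is avoided on purpose: the operator ring of the zero space has \<open>0 = 1\<close>.\<close>
locale scalar_ring =
  fixes scal :: "'k::field \<Rightarrow> 'a::{ring,monoid_mult}"
  assumes scal_central: "scal c * x = x * scal c"
    and scal_one: "scal 1 = 1"
    and scal_add: "scal (c + d) = scal c + scal d"
    and scal_mult: "scal (c * d) = scal c * scal d"
begin

lemma scal_zero [simp]: "scal 0 = 0"
  using scal_add[of 0 0] by simp

lemma scal_minus: "scal (- c) = - scal c"
proof -
  have "scal (- c) + scal c = 0" using scal_add[of "- c" c] by simp
  then show ?thesis by (simp only: eq_neg_iff_add_eq_0)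
qed

lemma double_commutant_scal: "scal c \<in> double_commutant t"
  by (rule double_commutantI) (rule scal_central[symmetric])

lemma double_commutant_scal_diff [simp]: "double_commutant (scal c - t) = double_commutant t"
proof -
  have "u * (scal c - t) = (scal c - t) * u \<longleftrightarrow> u * t = t * u" for u
    by (simp add: right_diff_distrib left_diff_distrib scal_central[of c u])
  then show ?thesis unfolding double_commutant_def by simp
qed

definition quasinil :: "'a \<Rightarrow> bool" where
  "quasinil t \<longleftrightarrow> (\<forall>\<mu>. \<mu> \<noteq> 0 \<longrightarrow> is_invertible (scal \<mu> - t))"

definition gDrazin_invertible :: "'a \<Rightarrow> bool" where
  "gDrazin_invertible t \<longleftrightarrow>
     (\<exists>s. s = s * t * s \<and> s \<in> double_commutant t \<and> quasinil (t - t * t * s))"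

lemma quasinil_invertible_one_plus: "quasinil q \<Longrightarrow> is_invertible (1 + q)"
proof -
  assume "quasinil q"
  then have "is_invertible (scal (- 1) - q)" unfolding quasinil_def by simp
  moreover have "scal (- 1) - q = - (1 + q)" by (simp add: scal_minus scal_one)
  ultimately show ?thesis by (simp only: is_invertible_uminus_iff)
qed

text \<open>If \<open>s\<close> inverts \<open>\<mu> - x y\<close> then \<open>(1 + y s x)/\<mu>\<close> inverts \<open>\<mu> - y x\<close>.\<close>
lemma jacobson_lemma:
  assumes "\<mu> \<noteq> 0" and "is_invertible (scal \<mu> - x * y)"
  shows "is_invertible (scal \<mu> - y * x)"
proof -
  obtain s where s: "s * (scal \<mu> - x * y) = 1" "(scal \<mu> - x * y) * s = 1"
    using assms(2) unfolding is_invertible_def by blast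
  define v where "v = scal (inverse \<mu>) * (1 + y * s * x)"
  have "(scal \<mu> - y * x) * (1 + y * s * x) = scal \<mu> - y * x + y * ((scal \<mu> - x * y) * s) * x"
    by (simp add: algebra_simps scal_central[of \<mu>] mult.assoc)
  then have r: "(scal \<mu> - y * x) * (1 + y * s * x) = scal \<mu>" using s by simp
  have "(1 + y * s * x) * (scal \<mu> - y * x) = scal \<mu> - y * x + y * (s * (scal \<mu> - x * y)) * x"
    by (simp add: algebra_simps scal_central[of \<mu>] mult.assoc)
  then have l: "(1 + y * s * x) * (scal \<mu> - y * x) = scal \<mu>" using s by simp
  have inv: "scal (inverse \<mu>) * scal \<mu> = 1"
    using assms(1) by (simp flip: scal_mult add: scal_one)
  show ?thesis
  proof (rule is_invertibleI)
    have "(scal \<mu> - y * x) * v = scal (inverse \<mu>) * ((scal \<mu> - y * x) * (1 + y * s * x))"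
      unfolding v_def by (simp only: mult.assoc[symmetric] scal_central[of "inverse \<mu>" "scal \<mu> - y * x"])
    then show "(scal \<mu> - y * x) * v = 1" by (simp only: r inv)
    have "v * (scal \<mu> - y * x) = scal (inverse \<mu>) * ((1 + y * s * x) * (scal \<mu> - y * x))"
      unfolding v_def by (rule mult.assoc)
    then show "v * (scal \<mu> - y * x) = 1" by (simp only: l inv)
  qed
qed

lemma quasinil_mult_swap: "quasinil (x * y) \<Longrightarrow> quasinil (y * x)"
  unfolding quasinil_def using jacobson_lemma by blast

lemma gDrazin_invertible_imp_spectral_idempotent:
  assumes "gDrazin_invertible t"
  obtains p where "p * p = p" "p \<in> double_commutant t" "quasinil (t * p)" "is_invertible (t + p)"
proof -
  obtain s where sts: "s = s * t * s" and s: "s \<in> double_commutant t" and q: "quasinil (t - t * t * s)"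
    using assms unfolding gDrazin_invertible_def by blast
  have ts: "t * s = s * t" using s by (rule double_commutant_commute)
  define p where "p = 1 - t * s"
  have "t * s * (t * s) = t * s" using sts by (simp add: mult.assoc)
  then have pp: "p * p = p" unfolding p_def by (simp add: algebra_simps)
  have p: "p \<in> double_commutant t" unfolding p_def
    by (intro double_commutant_diff double_commutant_mult double_commutant_one double_commutant_self s)
  have pt: "p * t = t * p" using p by (rule double_commutant_commute[symmetric])
  have "t * p = t - t * t * s" unfolding p_def by (simp add: algebra_simps mult.assoc)
  then have tp: "quasinil (t * p)" using q by simp
  have ps: "p * s = 0" and sp: "s * p = 0"
    unfolding p_def using sts ts by (simp_all add: algebra_simps)
  have "(t + p) * (s + p) = 1 + t * p" and "(s + p) * (t + p) = 1 + t * p"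
    using ps sp pp pt ts unfolding p_def by (simp_all add: algebra_simps)
  moreover obtain f where "f * (1 + t * p) = 1" "(1 + t * p) * f = 1"
    using quasinil_invertible_one_plus[OF tp] unfolding is_invertible_def by blast
  ultimately have "(t + p) * ((s + p) * f) = 1" and "(f * (s + p)) * (t + p) = 1"
    by (simp_all flip: mult.assoc) (simp add: mult.assoc)
  then have "is_invertible (t + p)" by (rule is_invertibleI)
  with pp p tp show thesis by (rule that)
qed

lemma spectral_idempotent_imp_gDrazin_invertible:
  assumes pp: "p * p = p" and p: "p \<in> double_commutant t"
    and tp: "quasinil (t * p)" and inv: "is_invertible (t + p)"
  shows "gDrazin_invertible t"
proof -
  obtain v where v: "v * (t + p) = 1" "(t + p) * v = 1"
    using inv unfolding is_invertible_def by blast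
  have "t + p \<in> double_commutant t" by (intro double_commutant_add double_commutant_self p)
  then have v_dc: "v \<in> double_commutant t" using v by (blast intro: double_commutant_inverse)
  have pt: "p * t = t * p" using p by (rule double_commutant_commute[symmetric])
  have pv: "p * v = v * p" using v_dc pt by (rule double_commutantD)
  define s where "s = v * (1 - p)"
  have s: "s \<in> double_commutant t" unfolding s_def
    by (intro double_commutant_diff double_commutant_mult double_commutant_one v_dc p)
  have pvp: "p * v * p = p * v" using pv pp by (metis mult.assoc)
  have "t * v = 1 - p * v" using v(2) by (simp add: algebra_simps eq_diff_eq)
  then have "t * v * (1 - p) = (1 - p * v) * (1 - p)" by (simp only:)
  also have "\<dots> = 1 - p - p * v + p * v * p" using pp by (simp add: algebra_simps)
  finally have tvp: "t * v * (1 - p) = 1 - p" using pvp by simp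
  have "(1 - p) * (1 - p) = 1 - p" using pp by (simp add: algebra_simps)
  moreover have "s * t * s = v * ((1 - p) * (t * v * (1 - p)))" unfolding s_def by (simp only: mult.assoc)
  ultimately have sts: "s = s * t * s" unfolding s_def tvp by simp
  have "t * t * s = t * (1 - p)" unfolding s_def using tvp by (simp only: mult.assoc)
  then have "t - t * t * s = t * p" by (simp add: algebra_simps)
  with sts s tp show ?thesis unfolding gDrazin_invertible_def by metis
qed

theorem cline_formula:
  assumes "gDrazin_invertible (a * b)"
  shows "gDrazin_invertible (b * a)"
proof -
  obtain d where dxd: "d = d * (a * b) * d" and d: "d \<in> double_commutant (a * b)"
    and q: "quasinil (a * b - a * b * (a * b) * d)"
    using assms unfolding gDrazin_invertible_def by blast
  have xd: "a * b * d = d * (a * b)" using d by (rule double_commutant_commute)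
  have "a * b * (d * d) = d * (a * b) * d" by (simp only: mult.assoc[symmetric] xd)
  also have "\<dots> = d" by (rule dxd[symmetric])
  finally have f1: "a * b * (d * d) = d" .
  have "d * d * (a * b) = d * (a * b * d)" by (simp only: mult.assoc[of d d] xd)
  also have "\<dots> = d * (a * b) * d" by (simp only: mult.assoc)
  also have "\<dots> = d" by (rule dxd[symmetric])
  finally have f2: "d * d * (a * b) = d" .
  define s where "s = b * (d * d) * a"
  have "s * (b * a) * s = b * ((d * d * (a * b)) * (a * b * (d * d))) * a"
    unfolding s_def by (simp only: mult.assoc)
  then have sts: "s = s * (b * a) * s" unfolding f1 f2 s_def by (simp add: mult.assoc)
  have "d * d * d \<in> double_commutant (a * b)" using d by (intro double_commutant_mult)
  moreover have "d * d = a * b * (d * d * d)"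
    using f1 by (simp only: mult.assoc[of "a * b" "d * d" d, symmetric])
  moreover have "d * d * d * (a * b) = d * (d * d * (a * b))" by (simp only: mult.assoc)
  then have "d * d = d * d * d * (a * b)" by (simp only: f2)
  ultimately have s: "s \<in> double_commutant (b * a)" unfolding s_def
    by (rule double_commutant_mult_swap)
  have "b * a * (b * a) * s = b * (a * b * (a * b * (d * d))) * a"
    unfolding s_def by (simp only: mult.assoc)
  then have "b * a - b * a * (b * a) * s = b * ((1 - a * b * d) * a)"
    unfolding f1 by (simp add: algebra_simps)
  moreover have "(1 - a * b * d) * a * b = a * b - a * b * (d * (a * b))"
    by (simp add: algebra_simps)
  then have "(1 - a * b * d) * a * b = a * b - a * b * (a * b) * d"
    by (simp only: xd[symmetric] mult.assoc)
  with q have "quasinil ((1 - a * b * d) * a * b)" by simp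
  then have "quasinil (b * ((1 - a * b * d) * a))" by (rule quasinil_mult_swap)
  ultimately have "quasinil (b * a - b * a * (b * a) * s)" by (simp only:)
  with sts s show ?thesis unfolding gDrazin_invertible_def by blast
qed

text \<open>The witness is \<open>w = p (\<mu> - (\<mu> - x) p)\<inverse>\<close>, an inverse of \<open>x\<close> on the range of \<open>p\<close>.\<close>
lemma spectral_idempotent_local_inverse:
  assumes "\<mu> \<noteq> 0" and pp: "p * p = p" and p: "p \<in> double_commutant x"
    and q: "quasinil ((scal \<mu> - x) * p)"
  obtains w where "x * w = p" "w * x = p" "p * w = w" "w * p = w" "w \<in> double_commutant x"
proof -
  define \<alpha> where "\<alpha> = scal \<mu> - x"
  obtain z where z: "z * (scal \<mu> - \<alpha> * p) = 1" "(scal \<mu> - \<alpha> * p) * z = 1"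
    using q \<open>\<mu> \<noteq> 0\<close> unfolding quasinil_def is_invertible_def \<alpha>_def by blast
  have \<alpha>: "\<alpha> \<in> double_commutant x" unfolding \<alpha>_def
    by (intro double_commutant_diff double_commutant_scal double_commutant_self)
  have "scal \<mu> - \<alpha> * p \<in> double_commutant x"
    by (intro double_commutant_diff double_commutant_mult double_commutant_scal \<alpha> p)
  then have z_dc: "z \<in> double_commutant x" using z by (blast intro: double_commutant_inverse)
  have px: "p * x = x * p" using p by (rule double_commutant_commute[symmetric])
  have pz: "p * z = z * p" using z_dc px by (rule double_commutantD)
  have xz: "x * z = z * x" using z_dc refl by (rule double_commutantD)
  have "\<alpha> * x = x * \<alpha>" using \<alpha> by (rule double_commutant_commute[symmetric])
  with p have p\<alpha>: "\<alpha> * p = p * \<alpha>" by (rule double_commutantD)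
  have "p * (\<alpha> * p) = \<alpha> * (p * p)" by (simp only: p\<alpha>[symmetric] mult.assoc[symmetric])
  then have "p * (scal \<mu> - \<alpha> * p) = scal \<mu> * p - \<alpha> * p"
    using pp by (simp add: right_diff_distrib scal_central)
  also have "\<dots> = x * p" unfolding \<alpha>_def by (simp add: left_diff_distrib)
  finally have xp: "x * p = p * (scal \<mu> - \<alpha> * p)" ..
  have xw: "x * (p * z) = p" using z(2) by (simp add: mult.assoc[symmetric] xp) (simp add: mult.assoc)
  moreover have "p * z * x = x * (p * z)"
    by (simp only: mult.assoc xz[symmetric]) (simp only: mult.assoc[symmetric] px)
  with xw have "p * z * x = p" by simp
  moreover have ppz: "p * (p * z) = p * z" by (simp only: mult.assoc[symmetric] pp)
  moreover have "p * z * p = p * z" by (simp only: mult.assoc pz[symmetric] ppz)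
  moreover have "p * z \<in> double_commutant x" by (intro double_commutant_mult p z_dc)
  ultimately show thesis by (rule that)
qed

theorem gDrazin_invertible_scal_diff_mult_swap_nonzero:
  assumes "\<mu> \<noteq> 0" and "gDrazin_invertible (scal \<mu> - a * b)"
  shows "gDrazin_invertible (scal \<mu> - b * a)"
proof -
  obtain p where pp: "p * p = p" and p: "p \<in> double_commutant (a * b)"
    and q: "quasinil ((scal \<mu> - a * b) * p)" and inv: "is_invertible (scal \<mu> - a * b + p)"
    using gDrazin_invertible_imp_spectral_idempotent[OF assms(2)] by auto
  obtain w where xw: "a * b * w = p" and wx: "w * (a * b) = p" and pw: "p * w = w" and wp: "w * p = w"
    and w: "w \<in> double_commutant (a * b)"
    using spectral_idempotent_local_inverse[OF assms(1) pp p q] by blast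
  define r where "r = b * w * a"
  have "r * r = b * (w * (a * b) * w) * a" unfolding r_def by (simp only: mult.assoc)
  then have rr: "r * r = r" unfolding r_def wx pw .
  have "w * w \<in> double_commutant (a * b)" using w by (intro double_commutant_mult)
  moreover have "w = a * b * (w * w)" by (simp only: mult.assoc[symmetric] xw pw)
  moreover have "w = w * w * (a * b)" by (simp only: mult.assoc wx wp)
  ultimately have "r \<in> double_commutant (b * a)" unfolding r_def by (rule double_commutant_mult_swap)
  then have r: "r \<in> double_commutant (scal \<mu> - b * a)" by simp
  have "scal \<mu> * r = b * (scal \<mu> * w) * a"
    unfolding r_def by (simp only: mult.assoc[symmetric] scal_central[of \<mu> b])
  moreover have "b * a * r = b * p * a" unfolding r_def xw[symmetric] by (simp only: mult.assoc)
  ultimately have "(scal \<mu> - b * a) * r = b * ((scal \<mu> * w - p) * a)"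
    by (simp add: left_diff_distrib right_diff_distrib mult.assoc)
  moreover have "p * (a * b) = a * b * p" using p by (rule double_commutant_commute[symmetric])
  then have "(scal \<mu> * w - p) * a * b = (scal \<mu> - a * b) * p"
    using wx by (simp add: left_diff_distrib mult.assoc)
  with q have "quasinil ((scal \<mu> * w - p) * a * b)" by simp
  then have "quasinil (b * ((scal \<mu> * w - p) * a))" by (rule quasinil_mult_swap)
  ultimately have rq: "quasinil ((scal \<mu> - b * a) * r)" by simp
  have "(1 - w) * a * b = a * b - p" using wx by (simp add: left_diff_distrib mult.assoc)
  then have "is_invertible (scal \<mu> - (1 - w) * a * b)" using inv by (simp add: algebra_simps)
  then have "is_invertible (scal \<mu> - b * ((1 - w) * a))"
    using assms(1) jacobson_lemma by blast
  then have "is_invertible (scal \<mu> - b * a + r)" unfolding r_def by (simp add: algebra_simps)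
  with rr r rq show ?thesis by (rule spectral_idempotent_imp_gDrazin_invertible)
qed

theorem gDrazin_invertible_scal_diff_mult_swap:
  assumes "gDrazin_invertible (scal \<mu> - a * b)"
  shows "gDrazin_invertible (scal \<mu> - b * a)"
proof (cases "\<mu> = 0")
  case True
  then have "gDrazin_invertible ((- a) * b)" using assms by simp
  then have "gDrazin_invertible (b * (- a))" by (rule cline_formula)
  then show ?thesis using True by simp
next
  case False
  then show ?thesis using assms by (rule gDrazin_invertible_scal_diff_mult_swap_nonzero)
qed

end

section \<open>Bounded operators and the Neumann series\<close>

lemma bounded_linear_scaleC: "bounded_linear (scaleC c :: 'a::complex_normed_space \<Rightarrow> 'a)"
proof (rule bounded_linear_intro[where K = "cmod c"])
  show "scaleC c (x + y) = scaleC c x + scaleC c y" for x y :: 'a by (rule scaleC_add_right)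
  show "scaleC c (r *\<^sub>R x) = r *\<^sub>R scaleC c x" for r and x :: 'a
    unfolding scaleR_scaleC scaleC_scaleC by (simp only: mult.commute)
  show "norm (scaleC c x) \<le> norm x * cmod c" for x :: 'a by (simp add: norm_scaleC mult.commute)
qed

lemmas scaleC_zero_right [simp] = linear_0[OF bounded_linear.linear[OF bounded_linear_scaleC]]
lemmas scaleC_minus_right = linear_neg[OF bounded_linear.linear[OF bounded_linear_scaleC]]
lemmas scaleC_diff_right = linear_diff[OF bounded_linear.linear[OF bounded_linear_scaleC]]

lemma LopD: "T \<in> Lop \<Longrightarrow> bounded_linear T"
  and Lop_scaleC_commute: "T \<in> Lop \<Longrightarrow> T (scaleC c x) = scaleC c (T x)"
  unfolding Lop_def by blast+

lemma Lop_id: "id \<in> Lop"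
  by (simp add: Lop_def bounded_linear_ident[unfolded id_def] id_def)

lemma Lop_zero: "(\<lambda>x. 0) \<in> Lop"
  by (simp add: Lop_def bounded_linear_zero)

lemma Lop_scaleC: "scaleC c \<in> Lop"
  by (auto simp: Lop_def bounded_linear_scaleC scaleC_scaleC mult.commute)

lemma Lop_comp: "S \<in> Lop \<Longrightarrow> T \<in> Lop \<Longrightarrow> S \<circ> T \<in> Lop"
  unfolding Lop_def o_def by (auto intro: bounded_linear_compose[of S T])

lemma Lop_add: "S \<in> Lop \<Longrightarrow> T \<in> Lop \<Longrightarrow> (\<lambda>x. S x + T x) \<in> Lop"
  by (auto simp: Lop_def scaleC_add_right intro: bounded_linear_add)

lemma Lop_minus: "T \<in> Lop \<Longrightarrow> (\<lambda>x. - T x) \<in> Lop"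
  by (auto simp: Lop_def scaleC_minus_right intro: bounded_linear_minus)

lemma Lop_diff: "S \<in> Lop \<Longrightarrow> T \<in> Lop \<Longrightarrow> (\<lambda>x. S x - T x) \<in> Lop"
  by (auto simp: Lop_def scaleC_diff_right intro: bounded_linear_sub)

lemma Lop_funpow: "T \<in> Lop \<Longrightarrow> T ^^ n \<in> Lop"
  by (induction n) (simp_all add: Lop_id Lop_comp)

lemma Lop_inverse:
  assumes L: "L \<in> Lop" and SL: "\<And>x. S (L x) = x" and LS: "\<And>y. L (S y) = y"
    and bound: "\<And>y. norm (S y) \<le> norm y * C"
  shows "S \<in> Lop"
proof -
  have add: "S (x + y) = S x + S y" for x y
    by (metis LS SL linear_add[OF bounded_linear.linear[OF LopD[OF L]]])
  have scaleC: "S (scaleC c x) = scaleC c (S x)" for c x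
    by (metis LS SL Lop_scaleC_commute[OF L])
  have "bounded_linear S"
    by (rule bounded_linear_intro[OF add _ bound]) (simp only: scaleR_scaleC scaleC)
  with scaleC show ?thesis unfolding Lop_def by blast
qed

lemma norm_funpow_le:
  fixes T :: "'a::real_normed_vector \<Rightarrow> 'a"
  assumes "\<And>x. norm (T x) \<le> K * norm x" and "0 \<le> K"
  shows "norm ((T ^^ n) x) \<le> K ^ n * norm x"
proof (induction n)
  case (Suc n)
  have "norm ((T ^^ Suc n) x) \<le> K * norm ((T ^^ n) x)" by (simp add: assms(1))
  also have "\<dots> \<le> K * (K ^ n * norm x)" using Suc \<open>0 \<le> K\<close> by (rule mult_left_mono)
  finally show ?case by simp
qed simp

lemma neumann_series_estimates:
  fixes T :: "'a::complex_banach \<Rightarrow> 'a" and y :: 'a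
  assumes T: "\<And>x. norm (T x) \<le> K * norm x" and K: "0 \<le> K" "K < cmod \<mu>"
  defines "g \<equiv> \<lambda>n. scaleC (inverse \<mu> ^ n) ((T ^^ n) y)"
  shows "(\<lambda>n. g n - g (Suc n)) sums y"
    and "summable (\<lambda>n. scaleC (inverse \<mu>) (g n))"
    and "norm (\<Sum>n. scaleC (inverse \<mu>) (g n)) \<le> norm y * (1 / (cmod \<mu> - K))"
proof -
  define r where "r = K / cmod \<mu>"
  have \<mu>: "0 < cmod \<mu>" using K by linarith
  have r: "0 \<le> r" "r < 1" unfolding r_def using K \<mu> by (simp_all add: field_simps)
  have g_le: "norm (g n) \<le> r ^ n * norm y" for n
  proof -
    have "norm (g n) = inverse (cmod \<mu>) ^ n * norm ((T ^^ n) y)"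
      unfolding g_def by (simp add: norm_scaleC norm_power norm_inverse)
    also have "\<dots> \<le> inverse (cmod \<mu>) ^ n * (K ^ n * norm y)"
      by (intro mult_left_mono norm_funpow_le T K) simp
    also have "\<dots> = r ^ n * norm y" unfolding r_def by (simp add: power_divide field_simps)
    finally show ?thesis .
  qed
  have "g \<longlonglongrightarrow> 0"
  proof (rule Lim_null_comparison)
    show "\<forall>\<^sub>F n in sequentially. norm (g n) \<le> r ^ n * norm y" using g_le by simp
    show "(\<lambda>n. r ^ n * norm y) \<longlonglongrightarrow> 0"
      using r by (intro tendsto_mult_left_zero LIMSEQ_power_zero) simp
  qed
  then show "(\<lambda>n. g n - g (Suc n)) sums y"
    using telescope_sums' by (force simp: g_def scaleC_one)
  have term_le: "norm (scaleC (inverse \<mu>) (g n)) \<le> norm y / cmod \<mu> * r ^ n" for n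
  proof -
    have "norm (scaleC (inverse \<mu>) (g n)) = norm (g n) / cmod \<mu>"
      by (simp add: norm_scaleC norm_inverse divide_inverse mult.commute)
    also have "\<dots> \<le> r ^ n * norm y / cmod \<mu>" by (rule divide_right_mono[OF g_le]) simp
    also have "\<dots> = norm y / cmod \<mu> * r ^ n" by simp
    finally show ?thesis .
  qed
  have geometric: "summable (\<lambda>n. norm y / cmod \<mu> * r ^ n)"
    using r by (intro summable_mult summable_geometric) simp
  then show "summable (\<lambda>n. scaleC (inverse \<mu>) (g n))"
    by (rule summable_comparison_test'[of _ 0]) (rule term_le)
  have "norm (\<Sum>n. scaleC (inverse \<mu>) (g n)) \<le> (\<Sum>n. norm y / cmod \<mu> * r ^ n)"
    by (rule norm_suminf_le[OF term_le geometric])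
  also have "\<dots> = norm y / cmod \<mu> * (\<Sum>n. r ^ n)"
    using r by (intro suminf_mult summable_geometric) simp
  also have "\<dots> = norm y / cmod \<mu> * (1 / (1 - r))"
    using r by (simp add: suminf_geometric)
  also have "\<dots> = norm y * (1 / (cmod \<mu> - K))"
    unfolding r_def using \<mu> K by (simp add: field_simps)
  finally show "norm (\<Sum>n. scaleC (inverse \<mu>) (g n)) \<le> norm y * (1 / (cmod \<mu> - K))" .
qed

lemma neumann_series_invertible_op:
  fixes T :: "'a::complex_banach \<Rightarrow> 'a"
  assumes T: "T \<in> Lop" and bound: "\<And>x. norm (T x) \<le> K * norm x" and K: "0 \<le> K" "K < cmod \<mu>"
  shows "invertible_op (\<lambda>x. scaleC \<mu> x - T x)"
proof -
  define L where "L x = scaleC \<mu> x - T x" for x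
  define g where "g y n = scaleC (inverse \<mu> ^ n) ((T ^^ n) y)" for y n
  define S where "S y = (\<Sum>n. scaleC (inverse \<mu>) (g y n))" for y
  have \<mu>: "\<mu> \<noteq> 0" using K by auto
  have L: "L \<in> Lop" unfolding L_def by (intro Lop_diff Lop_scaleC T)
  have tel: "(\<lambda>n. g y n - g y (Suc n)) sums y" for y
    unfolding g_def by (rule neumann_series_estimates(1)[OF bound K])
  have "(\<lambda>n. L (scaleC (inverse \<mu>) (g y n))) sums L (S y)" for y
    unfolding S_def using neumann_series_estimates(2)[OF bound K]
    by (intro bounded_linear.sums[OF LopD[OF L]] summable_sums) (simp add: g_def)
  moreover have "L (scaleC (inverse \<mu>) (g y n)) = g y n - g y (Suc n)" for y n
    unfolding L_def g_def using \<mu>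
    by (simp add: scaleC_scaleC Lop_scaleC_commute[OF T] scaleC_one mult.assoc[symmetric])
  ultimately have LS: "L (S y) = y" for y using tel sums_unique2 by fastforce
  have "(T ^^ n) (L y) = scaleC \<mu> ((T ^^ n) y) - (T ^^ Suc n) y" for y n
    unfolding L_def funpow_Suc_right o_apply
    by (simp add: Lop_scaleC_commute[OF Lop_funpow[OF T]]
        linear_diff[OF bounded_linear.linear[OF LopD[OF Lop_funpow[OF T]]]])
  moreover have "inverse \<mu> * (inverse \<mu> ^ n * \<mu>) = inverse \<mu> ^ n" for n
    using \<mu> by (simp add: field_simps)
  ultimately have "scaleC (inverse \<mu>) (g (L y) n) = g y n - g y (Suc n)" for y n
    unfolding g_def by (simp only: scaleC_diff_right scaleC_scaleC power_Suc)
  then have SL: "S (L y) = y" for y unfolding S_def using sums_unique[OF tel, symmetric] by simp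
  have "norm (S y) \<le> norm y * (1 / (cmod \<mu> - K))" for y
    unfolding S_def g_def by (rule neumann_series_estimates(3)[OF bound K])
  then have "S \<in> Lop" by (rule Lop_inverse[OF L SL LS])
  moreover have "S \<circ> L = id" "L \<circ> S = id" by (simp_all add: fun_eq_iff SL LS)
  ultimately show ?thesis unfolding invertible_op_def L_def[abs_def] by blast
qed

lemma bdd_above_cmod_op_spectrum:
  fixes T :: "'a::complex_banach \<Rightarrow> 'a"
  assumes "T \<in> Lop"
  shows "bdd_above (cmod ` op_spectrum T)"
proof -
  obtain K where K: "K > 0" "\<And>x. norm (T x) \<le> norm x * K"
    using bounded_linear.pos_bounded[OF LopD[OF assms]] by blast
  have "cmod \<mu> \<le> K" if "\<mu> \<in> op_spectrum T" for \<mu>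
  proof (rule ccontr)
    assume "\<not> cmod \<mu> \<le> K"
    then have "invertible_op (\<lambda>x. scaleC \<mu> x - T x)"
      using K by (intro neumann_series_invertible_op[OF assms, of K]) (auto simp: mult.commute)
    with that show False unfolding op_spectrum_def by simp
  qed
  then show ?thesis by (rule bdd_aboveI2)
qed

text \<open>The supremum of an unbounded set of reals is unspecified, so a zero spectral radius only
  forces the spectrum into \<open>{0}\<close> once the spectrum is known to be bounded.\<close>
lemma quasinilpotent_iff_op_spectrum_subset:
  fixes T :: "'a::complex_banach \<Rightarrow> 'a"
  assumes "T \<in> Lop"
  shows "quasinilpotent T \<longleftrightarrow> op_spectrum T \<subseteq> {0}"
proof
  assume "op_spectrum T \<subseteq> {0}"
  then have "insert 0 (cmod ` op_spectrum T) = {0}" by auto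
  then show "quasinilpotent T"
    unfolding quasinilpotent_def spectral_radius_def by (simp only: cSup_singleton)
next
  assume q: "quasinilpotent T"
  show "op_spectrum T \<subseteq> {0}"
  proof
    fix \<mu> assume "\<mu> \<in> op_spectrum T"
    moreover have "bdd_above (insert 0 (cmod ` op_spectrum T))"
      using bdd_above_cmod_op_spectrum[OF assms] by simp
    ultimately have "cmod \<mu> \<le> spectral_radius T"
      unfolding spectral_radius_def by (intro cSup_upper) auto
    with q show "\<mu> \<in> {0}" by (simp add: quasinilpotent_def)
  qed
qed

section \<open>The algebra of bounded operators\<close>

typedef (overloaded) 'a lop = "Lop :: ('a::complex_normed_space \<Rightarrow> 'a) set"
  morphisms apply_lop Abs_lop
  using Lop_id by blast

setup_lifting type_definition_lop

lemma lop_eqI: "(\<And>x. apply_lop s x = apply_lop t x) \<Longrightarrow> s = t"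
  by (metis apply_lop_inject ext)

lemma apply_lop_linear: "linear (apply_lop t)"
  using apply_lop[of t] by (simp add: Lop_def bounded_linear.linear)

instantiation lop :: (complex_normed_space) "{ring, monoid_mult}"
begin

lift_definition zero_lop :: "'a lop" is "\<lambda>x. 0" by (rule Lop_zero)
lift_definition one_lop :: "'a lop" is id by (rule Lop_id)
lift_definition plus_lop :: "'a lop \<Rightarrow> 'a lop \<Rightarrow> 'a lop" is "\<lambda>S T x. S x + T x" by (rule Lop_add)
lift_definition minus_lop :: "'a lop \<Rightarrow> 'a lop \<Rightarrow> 'a lop" is "\<lambda>S T x. S x - T x" by (rule Lop_diff)
lift_definition uminus_lop :: "'a lop \<Rightarrow> 'a lop" is "\<lambda>T x. - T x" by (rule Lop_minus)
lift_definition times_lop :: "'a lop \<Rightarrow> 'a lop \<Rightarrow> 'a lop" is "(\<circ>)" by (rule Lop_comp)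

instance
proof
  fix a b c :: "'a lop"
  show "a * (b + c) = a * b + a * c"
    by (rule lop_eqI) (simp add: times_lop.rep_eq plus_lop.rep_eq linear_add[OF apply_lop_linear])
qed (rule lop_eqI; simp add: times_lop.rep_eq plus_lop.rep_eq minus_lop.rep_eq uminus_lop.rep_eq
      zero_lop.rep_eq one_lop.rep_eq algebra_simps)+

end

lift_definition lop_scalar :: "complex \<Rightarrow> 'a::complex_normed_space lop" is scaleC
  by (rule Lop_scaleC)

interpretation lop: scalar_ring lop_scalar
proof
  fix c d :: complex and t :: "'a::complex_normed_space lop"
  show "lop_scalar c * t = t * lop_scalar c"
    using apply_lop[of t]
    by (intro lop_eqI) (simp add: times_lop.rep_eq lop_scalar.rep_eq Lop_scaleC_commute)
  show "lop_scalar 1 = (1 :: 'a lop)"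
    by (rule lop_eqI) (simp add: lop_scalar.rep_eq one_lop.rep_eq scaleC_one)
  show "lop_scalar (c + d) = (lop_scalar c + lop_scalar d :: 'a lop)"
    by (rule lop_eqI) (simp add: lop_scalar.rep_eq plus_lop.rep_eq scaleC_add_left)
  show "lop_scalar (c * d) = (lop_scalar c * lop_scalar d :: 'a lop)"
    by (rule lop_eqI) (simp add: lop_scalar.rep_eq times_lop.rep_eq scaleC_scaleC)
qed

lemma apply_lop_scalar_diff: "apply_lop (lop_scalar \<mu> - t) = (\<lambda>x. scaleC \<mu> x - apply_lop t x)"
  by (simp add: fun_eq_iff minus_lop.rep_eq lop_scalar.rep_eq)

lemma ex_Lop_iff: "(\<exists>S\<in>Lop. P S) \<longleftrightarrow> (\<exists>s. P (apply_lop s))"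
  and all_Lop_iff: "(\<forall>S\<in>Lop. P S) \<longleftrightarrow> (\<forall>s. P (apply_lop s))"
  unfolding type_definition.Rep_range[OF type_definition_lop, symmetric] by auto

lemma invertible_op_apply_lop_iff: "invertible_op (apply_lop t) \<longleftrightarrow> is_invertible t"
  unfolding invertible_op_def is_invertible_def ex_Lop_iff
  by (simp add: apply_lop_inject[symmetric] times_lop.rep_eq one_lop.rep_eq)

lemma quasinilpotent_apply_lop_iff:
  fixes t :: "'a::complex_banach lop"
  shows "quasinilpotent (apply_lop t) \<longleftrightarrow> lop.quasinil t"
  unfolding quasinilpotent_iff_op_spectrum_subset[OF apply_lop] op_spectrum_def
    lop.quasinil_def apply_lop_scalar_diff[symmetric] invertible_op_apply_lop_iff
  by blast

lemma has_gDrazin_inverse_apply_lop_iff: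
  fixes t :: "'a::complex_banach lop"
  shows "has_gDrazin_inverse (apply_lop t) \<longleftrightarrow> lop.gDrazin_invertible t"
proof -
  have "(\<lambda>x. apply_lop t x - apply_lop t (apply_lop t (apply_lop s x))) = apply_lop (t - t * t * s)"
    for s
    by (simp add: fun_eq_iff minus_lop.rep_eq times_lop.rep_eq)
  then show ?thesis
    unfolding has_gDrazin_inverse_def lop.gDrazin_invertible_def double_commutant_def
      ex_Lop_iff all_Lop_iff
    by (simp only: times_lop.rep_eq[symmetric] apply_lop_inject quasinilpotent_apply_lop_iff
        mem_Collect_eq)
qed

lemma gDrazin_spectrum_apply_lop:
  fixes t :: "'a::complex_banach lop"
  shows "gDrazin_spectrum (apply_lop t) = {\<mu>. \<not> lop.gDrazin_invertible (lop_scalar \<mu> - t)}"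
  unfolding gDrazin_spectrum_def apply_lop_scalar_diff[symmetric] has_gDrazin_inverse_apply_lop_iff ..

theorem corollary4p3:
  fixes A B :: "'a::complex_banach \<Rightarrow> 'a"
  assumes "A \<in> Lop" and "B \<in> Lop"
  shows "gDrazin_spectrum (A \<circ> B) = gDrazin_spectrum (B \<circ> A)"
proof -
  obtain a b where "A = apply_lop a" and "B = apply_lop b"
    using assms by (metis apply_lop_cases)
  then have "A \<circ> B = apply_lop (a * b)" and "B \<circ> A = apply_lop (b * a)"
    by (simp_all add: times_lop.rep_eq)
  moreover have "lop.gDrazin_invertible (lop_scalar \<mu> - a * b) \<longleftrightarrow>
      lop.gDrazin_invertible (lop_scalar \<mu> - b * a)" for \<mu>
    using lop.gDrazin_invertible_scal_diff_mult_swap by blast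
  ultimately show ?thesis by (simp add: gDrazin_spectrum_apply_lop)
qed

end
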